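(* Let $k\ge 2$ and let $\mathsf{M}\subset\mathbb{R}^k$ be a $k$-dimensional lattice. Then there is a set $H\subset\mathsf{M}$ with \[\#H\ll_k 1+\det(\mathsf{M})^{1/(k-1)},\] such that $\|\mathbf{m}\|_\infty\ll_k 1+\det(\mathsf{M})^{1/(k-1)}$ for all $\mathbf{m}\in H$, and such that every $\mathbf{u}\in\widehat{\mathsf{M}}$ with $\|\mathbf{u}\|_\infty\le 1$ is orthogonal to some non-zero element of $H$.
   Context: For a $k$-dimensional lattice $\mathsf{M}\subset\mathbb{R}^k$, $\widehat{\mathsf{M}}=\{\mathbf{u}\in\mathbb{R}^k:\ \mathbf{u}^T\mathbf{m}\in\mathbb{Z}\ \text{for all }\mathbf{m}\in\mathsf{M}\}$. Implied constants depend only on $k$. *)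

theory Defs
  imports "HOL-Analysis.Analysis"
begin

text \<open>For invertible B this is a full-rank (k-dimensional) lattice in R^k, and
  its determinant (covolume) is |det B|.\<close>
definition lattice_gen :: "real^'n^'n \<Rightarrow> (real^'n) set" where
  "lattice_gen B = {B *v z | z. \<forall>i. z $ i \<in> \<int>}"

definition dual_lattice :: "(real^'n) set \<Rightarrow> (real^'n) set" where
  "dual_lattice M = {u. \<forall>m\<in>M. u \<bullet> m \<in> \<int>}"

end

theory Submission
  imports Defs
begin

(* Write N(t) = lattice_count B t for the number of points of the lattice M = lattice_gen B in the
   box of radius t (sup norm), and k for the dimension. Blichfeldt's principle gives
   N(t) >= t^k / det M, and covering the box of radius t by 9^k cubes of side t/4 gives
   N(t) <= 9^k N(t/4). If N(t/2) > k t + 1 and u is a dual vector with |u| <= 1, the integers u.m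
   for the points m counted by N(t/2) take at most k t + 1 values, so two of these points differ by
   a nonzero m with |m| <= t and u.m = 0.
   For T = c (1 + det M^(1/(k-1))) the volume bound gives N(T/2) > k T + 1. Halving T until this
   inequality fails for the first time (it must fail, since M is discrete) yields a t <= T with
   N(t/2) > k t + 1 and N(t/4) <= k t/2 + 1; the lattice points in the box of radius t then form
   the required set H, of size at most 9^k N(t/4) <= 9^k (k T + 1). *)

section \<open>Volume of linear images for arbitrary finite index types\<close>

text \<open>The library proves the determinant formula for the volume of a linear image
  (measure_linear_image) only for index types of class wellorder. It is transported here along a
  copy of the finite index type, ordered through the injection to_nat into the natural numbers.\<close>

typedef 'a wellordered = "UNIV :: 'a set"
  by (rule UNIV_witness)

instantiation wellordered :: (countable) wellorder
begin

definition less_eq_wellordered :: "'a wellordered \<Rightarrow> 'a wellordered \<Rightarrow> bool" where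
  "x \<le> y \<longleftrightarrow> to_nat (Rep_wellordered x) \<le> to_nat (Rep_wellordered y)"

definition less_wellordered :: "'a wellordered \<Rightarrow> 'a wellordered \<Rightarrow> bool" where
  "x < y \<longleftrightarrow> to_nat (Rep_wellordered x) < to_nat (Rep_wellordered y)"

instance
proof
  fix x y z :: "'a wellordered"
  show "x < y \<longleftrightarrow> x \<le> y \<and> \<not> y \<le> x" "x \<le> x" "x \<le> y \<or> y \<le> x"
    by (auto simp: less_eq_wellordered_def less_wellordered_def)
  show "x \<le> y \<Longrightarrow> y \<le> z \<Longrightarrow> x \<le> z"
    unfolding less_eq_wellordered_def by (rule order_trans)
  show "x = y" if "x \<le> y" "y \<le> x"
  proof -
    have "to_nat (Rep_wellordered x) = to_nat (Rep_wellordered y)"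
      using that unfolding less_eq_wellordered_def by (rule antisym)
    then show ?thesis
      by (simp add: Rep_wellordered_inject)
  qed
next
  fix P :: "'a wellordered \<Rightarrow> bool" and a
  assume step: "\<And>x. (\<And>y. y < x \<Longrightarrow> P y) \<Longrightarrow> P x"
  show "P a"
  proof (induction a rule: measure_induct_rule[of "to_nat \<circ> Rep_wellordered"])
    case (less x)
    show ?case
      by (rule step, rule less) (simp add: less_wellordered_def)
  qed
qed

end

instance wellordered :: (finite) finite
proof
  show "finite (UNIV :: 'a wellordered set)"
    unfolding type_definition.univ[OF type_definition_wellordered] by simp
qed

lemma bij_Rep_wellordered: "bij Rep_wellordered"
  by (metis Rep_wellordered_inject Abs_wellordered_inverse UNIV_I bij_iff)

definition vec_reindex :: "('m \<Rightarrow> 'n) \<Rightarrow> 'a^'n \<Rightarrow> 'a^'m" where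
  "vec_reindex \<sigma> x = (\<chi> i. x $ \<sigma> i)"

lemma vec_reindex_nth [simp]: "vec_reindex \<sigma> x $ i = x $ \<sigma> i"
  by (simp add: vec_reindex_def)

lemma vec_reindex_inv [simp]:
  assumes "bij \<sigma>"
  shows "vec_reindex (inv \<sigma>) (vec_reindex \<sigma> x) = x" "vec_reindex \<sigma> (vec_reindex (inv \<sigma>) y) = y"
  using assms by (simp_all add: vec_eq_iff bij_is_inj bij_is_surj surj_f_inv_f)

lemma bounded_linear_vec_reindex: "bounded_linear (vec_reindex \<sigma> :: real^'n \<Rightarrow> real^'m)"
  by (simp add: linear_conv_bounded_linear[symmetric] linear_iff vec_eq_iff)

lemma matrix_vector_mult_reindex:
  fixes A :: "'a::semiring_1^'n^'n" and \<sigma> :: "'m::finite \<Rightarrow> 'n::finite"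
  assumes "bij \<sigma>"
  shows "(\<chi> i j. A $ \<sigma> i $ \<sigma> j) *v vec_reindex \<sigma> x = vec_reindex \<sigma> (A *v x)"
proof -
  have "(\<Sum>j\<in>UNIV. A $ \<sigma> i $ \<sigma> j * x $ \<sigma> j) = (\<Sum>k\<in>UNIV. A $ \<sigma> i $ k * x $ k)" for i
    using sum.reindex_bij_betw[of \<sigma> UNIV UNIV "\<lambda>k. A $ \<sigma> i $ k * x $ k"] assms by simp
  then show ?thesis
    by (simp add: vec_eq_iff matrix_vector_mult_def)
qed

lemma permutes_conjugate:
  fixes \<sigma> :: "'m \<Rightarrow> 'n"
  assumes "bij \<sigma>" "p permutes UNIV"
  shows "inv \<sigma> \<circ> p \<circ> \<sigma> permutes UNIV"
  using assms bij_imp_bij_inv[OF assms(1)]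
  by (auto intro!: bij_imp_permutes bij_comp simp: permutes_bij)

lemma sign_conjugate:
  fixes \<sigma> :: "'m \<Rightarrow> 'n::finite"
  assumes "bij \<sigma>" "p permutes UNIV"
  shows "sign (inv \<sigma> \<circ> p \<circ> \<sigma>) = sign p"
proof -
  have "bij (inv \<sigma>)"
    using assms(1) by (rule bij_imp_bij_inv)
  then have "inv \<sigma> \<circ> p \<circ> \<sigma> = map_permutation UNIV (inv \<sigma>) p"
    using bij_is_surj[OF \<open>bij (inv \<sigma>)\<close>]
    by (simp add: map_permutation_def restrict_id_def inv_inv_eq[OF assms(1)] comp_def)
  then show ?thesis
    using assms(2) bij_is_inj[OF \<open>bij (inv \<sigma>)\<close>] by (simp add: sign_map_permutation)
qed

lemma det_reindex:
  fixes A :: "'a::comm_ring_1^'n^'n" and \<sigma> :: "'m::finite \<Rightarrow> 'n::finite"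
  assumes "bij \<sigma>"
  shows "det (\<chi> i j. A $ \<sigma> i $ \<sigma> j) = det A"
proof -
  have \<sigma>_inv [simp]: "inv \<sigma> (\<sigma> x) = x" "\<sigma> (inv \<sigma> y) = y" for x y
    using assms by (simp_all add: bij_is_inj bij_is_surj surj_f_inv_f)
  define conj where "conj p = inv \<sigma> \<circ> p \<circ> \<sigma>" for p :: "'n \<Rightarrow> 'n"
  have "det (\<chi> i j. A $ \<sigma> i $ \<sigma> j) =
        (\<Sum>p | p permutes UNIV. of_int (sign (conj p)) * (\<Prod>i\<in>UNIV. A $ \<sigma> i $ \<sigma> (conj p i)))"
    unfolding det_def
  proof (rule sum.reindex_bij_witness[where i = conj and j = "\<lambda>q. \<sigma> \<circ> q \<circ> inv \<sigma>"])
    fix q :: "'m \<Rightarrow> 'm" assume "q \<in> {q. q permutes UNIV}"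
    then have "inv (inv \<sigma>) \<circ> q \<circ> inv \<sigma> permutes UNIV"
      using permutes_conjugate[OF bij_imp_bij_inv[OF assms]] by simp
    then show "\<sigma> \<circ> q \<circ> inv \<sigma> \<in> {p. p permutes UNIV}"
      by (simp add: inv_inv_eq[OF assms])
    show conj_q: "conj (\<sigma> \<circ> q \<circ> inv \<sigma>) = q"
      by (simp add: conj_def fun_eq_iff)
    show "of_int (sign (conj (\<sigma> \<circ> q \<circ> inv \<sigma>))) *
        (\<Prod>i\<in>UNIV. A $ \<sigma> i $ \<sigma> (conj (\<sigma> \<circ> q \<circ> inv \<sigma>) i)) =
        of_int (sign q) * (\<Prod>i\<in>UNIV. (\<chi> i j. A $ \<sigma> i $ \<sigma> j) $ i $ q i)"
      by (simp only: conj_q vec_lambda_beta)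
  next
    fix p :: "'n \<Rightarrow> 'n" assume "p \<in> {p. p permutes UNIV}"
    then show "\<sigma> \<circ> conj p \<circ> inv \<sigma> = p" "conj p \<in> {q. q permutes UNIV}"
      by (simp_all add: conj_def permutes_conjugate[OF assms]) (simp add: fun_eq_iff)
  qed
  also have "\<dots> = (\<Sum>p | p permutes UNIV. of_int (sign p) * (\<Prod>j\<in>UNIV. A $ j $ p j))"
  proof (rule sum.cong)
    fix p :: "'n \<Rightarrow> 'n" assume "p \<in> {p. p permutes UNIV}"
    have "(\<Prod>i\<in>UNIV. A $ \<sigma> i $ \<sigma> (conj p i)) = (\<Prod>i\<in>UNIV. A $ \<sigma> i $ p (\<sigma> i))"
      by (simp add: conj_def)
    also have "\<dots> = (\<Prod>j\<in>UNIV. A $ j $ p j)"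
      using prod.reindex_bij_betw[of \<sigma> UNIV UNIV "\<lambda>j. A $ j $ p j"] assms by simp
    finally show "of_int (sign (conj p)) * (\<Prod>i\<in>UNIV. A $ \<sigma> i $ \<sigma> (conj p i)) =
        of_int (sign p) * (\<Prod>j\<in>UNIV. A $ j $ p j)"
      using \<open>p \<in> _\<close> assms by (simp add: conj_def sign_conjugate)
  qed simp
  finally show ?thesis
    unfolding det_def .
qed

lemma vec_reindex_cbox:
  fixes \<sigma> :: "'m::finite \<Rightarrow> 'n::finite" and a b :: "real^'n"
  assumes "bij \<sigma>"
  shows "vec_reindex \<sigma> ` cbox a b = cbox (vec_reindex \<sigma> a) (vec_reindex \<sigma> b)"
proof
  show "vec_reindex \<sigma> ` cbox a b \<subseteq> cbox (vec_reindex \<sigma> a) (vec_reindex \<sigma> b)"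
    by (auto simp: mem_box_cart)
  show "cbox (vec_reindex \<sigma> a) (vec_reindex \<sigma> b) \<subseteq> vec_reindex \<sigma> ` cbox a b"
  proof
    fix y assume y: "y \<in> cbox (vec_reindex \<sigma> a) (vec_reindex \<sigma> b)"
    have "a $ j \<le> y $ inv \<sigma> j \<and> y $ inv \<sigma> j \<le> b $ j" for j
      using y[unfolded mem_box_cart, rule_format, of "inv \<sigma> j"] assms
      by (simp add: bij_is_surj surj_f_inv_f)
    then have "vec_reindex (inv \<sigma>) y \<in> cbox a b"
      by (simp add: mem_box_cart)
    then show "y \<in> vec_reindex \<sigma> ` cbox a b"
      using assms by (intro image_eqI[of _ _ "vec_reindex (inv \<sigma>) y"]) simp_all
  qed
qed

lemma content_vec_reindex_cbox:
  fixes \<sigma> :: "'m::finite \<Rightarrow> 'n::finite" and a b :: "real^'n"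
  assumes "bij \<sigma>"
  shows "measure lborel (vec_reindex \<sigma> ` cbox a b) = measure lborel (cbox a b)"
proof (cases "cbox a b = {}")
  case False
  then have "(\<Prod>i\<in>UNIV. b $ \<sigma> i - a $ \<sigma> i) = (\<Prod>j\<in>UNIV. b $ j - a $ j)"
    using prod.reindex_bij_betw[of \<sigma> UNIV UNIV "\<lambda>j. b $ j - a $ j"] assms by simp
  moreover have "cbox (vec_reindex \<sigma> a) (vec_reindex \<sigma> b) \<noteq> {}"
    using False by (simp add: vec_reindex_cbox[OF assms, symmetric])
  ultimately show ?thesis
    using False by (simp add: vec_reindex_cbox[OF assms] content_cbox_cart)
qed simp

lemma indicator_has_integral_cbox_iff:
  assumes "S \<subseteq> cbox a b"
  shows "(indicat_real S has_integral m) (cbox a b) \<longleftrightarrow> S \<in> lmeasurable \<and> measure lebesgue S = m"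
proof -
  have ind: "indicat_real S = (\<lambda>x. if x \<in> S then 1 else 0)"
    by (simp add: fun_eq_iff)
  have "(indicat_real S has_integral m) (cbox a b) \<longleftrightarrow> ((\<lambda>_. 1) has_integral m) S"
    unfolding ind by (rule has_integral_restrict[OF assms])
  also have "\<dots> \<longleftrightarrow> (indicat_real S has_integral m) UNIV"
    unfolding ind by (rule has_integral_restrict_UNIV[symmetric])
  finally show ?thesis
    using lmeasurable_iff_indicator_has_integral by metis
qed

lemma measure_vec_reindex:
  fixes \<sigma> :: "'m::finite \<Rightarrow> 'n::finite" and S :: "(real^'n) set"
  assumes \<sigma>: "bij \<sigma>" and "bounded S" "S \<in> sets lebesgue"
  shows "vec_reindex \<sigma> ` S \<in> lmeasurable \<and> measure lebesgue (vec_reindex \<sigma> ` S) = measure lebesgue S"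
proof -
  obtain a where S: "S \<subseteq> cbox (-a) a"
    using bounded_subset_cbox_symmetric[OF \<open>bounded S\<close>] by metis
  have "S \<in> lmeasurable"
    using assms by (intro bounded_set_imp_lmeasurable)
  then have int_S: "(indicat_real S has_integral measure lebesgue S) (cbox (-a) a)"
    using indicator_has_integral_cbox_iff[OF S] by blast
  have \<sigma>': "bij (inv \<sigma>)"
    using \<sigma> by (rule bij_imp_bij_inv)
  have g_cbox: "\<exists>w z. vec_reindex (inv \<sigma>) ` cbox u v = cbox w z" for u v :: "real^'m"
    using vec_reindex_cbox[OF \<sigma>'] by blast
  have h_cbox: "\<exists>w z. vec_reindex \<sigma> ` cbox u v = cbox w z" for u v :: "real^'n"
    using vec_reindex_cbox[OF \<sigma>] by blast
  have g_content: "measure lborel (vec_reindex (inv \<sigma>) ` cbox u v) = 1 * measure lborel (cbox u v)"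
    for u v :: "real^'m"
    using content_vec_reindex_cbox[OF \<sigma>'] by simp
  have g_cont: "isCont (vec_reindex (inv \<sigma>)) x" for x :: "real^'m"
    by (intro linear_continuous_at bounded_linear_vec_reindex)
  have "((\<lambda>x. indicat_real S (vec_reindex (inv \<sigma>) x)) has_integral measure lebesgue S)
      (vec_reindex \<sigma> ` cbox (-a) a)"
    using has_integral_twiddle[where r = 1 and g = "vec_reindex (inv \<sigma>)" and h = "vec_reindex \<sigma>",
        OF zero_less_one vec_reindex_inv(2)[OF \<sigma>] vec_reindex_inv(1)[OF \<sigma>]
        g_cont g_cbox h_cbox g_content int_S]
    by simp
  moreover have "indicat_real S (vec_reindex (inv \<sigma>) x) = indicat_real (vec_reindex \<sigma> ` S) x" for x
    using \<sigma> by (auto simp: indicator_def image_iff)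
  moreover have "vec_reindex \<sigma> ` S \<subseteq> vec_reindex \<sigma> ` cbox (-a) a"
    using S by blast
  ultimately show ?thesis
    unfolding vec_reindex_cbox[OF \<sigma>] by (simp add: indicator_has_integral_cbox_iff)
qed

proposition
  fixes A :: "real^'n^'n"
  assumes "bounded S" "S \<in> sets lebesgue"
  shows measurable_matrix_image: "(*v) A ` S \<in> lmeasurable"
    and measure_matrix_image: "measure lebesgue ((*v) A ` S) = \<bar>det A\<bar> * measure lebesgue S"
proof -
  let ?\<sigma> = "Rep_wellordered :: 'n wellordered \<Rightarrow> 'n"
  define A' where "A' = (\<chi> i j. A $ ?\<sigma> i $ ?\<sigma> j)"
  define S' where "S' = (*v) A' ` vec_reindex ?\<sigma> ` S"
  have \<sigma>: "bij ?\<sigma>" "bij (inv ?\<sigma>)"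
    using bij_Rep_wellordered by (auto intro: bij_imp_bij_inv)
  have image: "(*v) A ` S = vec_reindex (inv ?\<sigma>) ` S'"
    using \<sigma> unfolding S'_def A'_def image_image matrix_vector_mult_reindex[OF \<sigma>(1)] by simp
  have "vec_reindex ?\<sigma> ` S \<in> lmeasurable" "measure lebesgue (vec_reindex ?\<sigma> ` S) = measure lebesgue S"
    using measure_vec_reindex[OF \<sigma>(1) assms] by auto
  then have S': "S' \<in> lmeasurable" "measure lebesgue S' = \<bar>det A\<bar> * measure lebesgue S"
    unfolding S'_def using det_reindex[OF \<sigma>(1), of A]
    by (simp_all add: measurable_linear_image measure_linear_image matrix_of_matrix_vector_mul A'_def)
  have "bounded S'"
    unfolding S'_def using \<open>bounded S\<close>
    by (intro bounded_linear_image bounded_linear_vec_reindex matrix_vector_mul_bounded_linear)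
  then show "(*v) A ` S \<in> lmeasurable" "measure lebesgue ((*v) A ` S) = \<bar>det A\<bar> * measure lebesgue S"
    using measure_vec_reindex[OF \<sigma>(2) _ fmeasurableD[OF S'(1)]] S'(2) by (simp_all add: image)
qed

section \<open>Blichfeldt's principle for the integer lattice\<close>

lemma finite_Ints_vec_bounded:
  fixes X :: "(real^'n) set"
  assumes "bounded X"
  shows "finite {z\<in>X. \<forall>i. z $ i \<in> \<int>}"
proof -
  obtain R where R: "\<And>x. x \<in> X \<Longrightarrow> norm x \<le> R"
    using assms bounded_iff by blast
  let ?F = "(\<lambda>f. \<chi> i. real_of_int (f i)) ` (UNIV \<rightarrow>\<^sub>E {-\<lceil>R\<rceil>..\<lceil>R\<rceil>})"
  have "{z\<in>X. \<forall>i. z $ i \<in> \<int>} \<subseteq> ?F"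
  proof
    fix z assume z: "z \<in> {z\<in>X. \<forall>i. z $ i \<in> \<int>}"
    define f where "f i = \<lfloor>z $ i\<rfloor>" for i
    have zf: "real_of_int (f i) = z $ i" for i
      using z by (auto simp: f_def elim!: Ints_cases)
    have "-R \<le> z $ i \<and> z $ i \<le> R" for i
      using R[of z] z component_le_norm_cart[of z i] by auto
    then have "\<lfloor>-R\<rfloor> \<le> f i \<and> f i \<le> \<lceil>R\<rceil>" for i
      unfolding f_def by (meson floor_mono floor_le_ceiling ceiling_mono order_trans)
    then have "f i \<in> {-\<lceil>R\<rceil>..\<lceil>R\<rceil>}" for i
      by (simp add: ceiling_def)
    moreover have "z = (\<chi> i. real_of_int (f i))"
      by (simp add: vec_eq_iff zf)
    ultimately show "z \<in> ?F"
      by (intro image_eqI[of _ _ f]) auto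
  qed
  moreover have "finite ?F"
    by (intro finite_imageI finite_PiE) auto
  ultimately show ?thesis
    by (rule finite_subset)
qed

lemma lmeasurable_cbox_slice:
  fixes S :: "(real^'n) set"
  assumes "S \<in> sets lebesgue"
  shows "{y \<in> cbox a b. y + z \<in> S} \<in> lmeasurable"
proof -
  have eq: "{y \<in> cbox a b. y + z \<in> S} = cbox a b \<inter> (\<lambda>x. - z + x) ` S"
    by (force simp: algebra_simps)
  have "(\<lambda>x. - z + x) ` S \<in> sets lebesgue"
    using assms by (rule lebesgue_sets_translation)
  then have "cbox a b \<inter> (\<lambda>x. - z + x) ` S \<in> sets lebesgue"
    by (intro sets.Int) (simp_all add: fmeasurableD)
  then show ?thesis
    unfolding eq by (rule bounded_set_imp_lmeasurable[rotated]) (simp add: bounded_Int)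
qed

lemma measure_le_sum_cube_slices:
  fixes S :: "(real^'n) set"
  defines "U \<equiv> cbox 0 (\<chi> i. 1)"
  assumes "S \<in> sets lebesgue" "finite Z"
    and Z: "\<And>z. (\<forall>i. z $ i \<in> \<int>) \<Longrightarrow> (\<exists>y\<in>U. y + z \<in> S) \<Longrightarrow> z \<in> Z"
  shows "measure lebesgue S \<le> (\<Sum>z\<in>Z. measure lebesgue {y\<in>U. y + z \<in> S})"
proof -
  define A where "A z = {y\<in>U. y + z \<in> S}" for z
  have A_lmeasurable: "A z \<in> lmeasurable" for z
    unfolding A_def U_def using assms(2) by (rule lmeasurable_cbox_slice)
  have cover: "S \<subseteq> (\<Union>z\<in>Z. (+) z ` A z)"
  proof
    fix w assume w: "w \<in> S"
    define z :: "real^'n" where "z = (\<chi> i. real_of_int \<lfloor>w $ i\<rfloor>)"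
    have "w - z \<in> U"
      by (simp add: U_def z_def mem_box_cart) linarith
    then have "z \<in> Z" "w - z \<in> A z"
      using w by (auto simp: z_def A_def intro!: Z bexI[of _ "w - z"])
    then show "w \<in> (\<Union>z\<in>Z. (+) z ` A z)"
      by (auto intro!: bexI[of _ z] image_eqI[of _ _ "w - z"])
  qed
  have "measure lebesgue S \<le> measure lebesgue (\<Union>z\<in>Z. (+) z ` A z)"
    using assms(2,3) A_lmeasurable
    by (intro measure_mono_fmeasurable[OF cover]) (auto intro: measurable_translation)
  also have "\<dots> \<le> (\<Sum>z\<in>Z. measure lebesgue ((+) z ` A z))"
    using A_lmeasurable by (intro measure_UNION_le assms(3) fmeasurableD measurable_translation)
  also have "\<dots> = (\<Sum>z\<in>Z. measure lebesgue (A z))"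
    by (simp add: measure_translation)
  finally show ?thesis
    by (simp add: A_def)
qed

lemma finite_Ints_vec_translates_meeting:
  fixes S U :: "(real^'n) set"
  assumes "bounded S" "bounded U"
  shows "finite {z. (\<forall>i. z $ i \<in> \<int>) \<and> (\<exists>y\<in>U. y + z \<in> S)}"
proof (rule finite_subset)
  show "{z. (\<forall>i. z $ i \<in> \<int>) \<and> (\<exists>y\<in>U. y + z \<in> S)} \<subseteq>
      {z \<in> (\<lambda>(x, y). x - y) ` (S \<times> U). \<forall>i. z $ i \<in> \<int>}"
    by force
  show "finite {z \<in> (\<lambda>(x, y). x - y) ` (S \<times> U). \<forall>i. z $ i \<in> \<int>}"
    using assms by (intro finite_Ints_vec_bounded bounded_minus)
qed

lemma sum_indicator_cube_slices:
  fixes S U :: "(real^'n) set"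
  defines "Z \<equiv> {z. (\<forall>i. z $ i \<in> \<int>) \<and> (\<exists>y\<in>U. y + z \<in> S)}"
  assumes "finite Z"
  shows "(\<Sum>z\<in>Z. indicat_real {y\<in>U. y + z \<in> S} y) =
    real (card {z. (\<forall>i. z $ i \<in> \<int>) \<and> y + z \<in> S}) * indicat_real U y"
proof (cases "y \<in> U")
  case True
  then have "{z\<in>Z. y \<in> U \<and> y + z \<in> S} = {z. (\<forall>i. z $ i \<in> \<int>) \<and> y + z \<in> S}"
    by (auto simp: Z_def)
  then show ?thesis
    using True assms(2) by (simp add: indicator_def sum.If_cases Int_def)
qed (simp add: indicator_def)

lemma content_unit_cube_cart: "measure lborel (cbox 0 (\<chi> i. 1) :: (real^'n) set) = 1"
proof -
  have "cbox 0 (\<chi> i. 1) \<noteq> ({} :: (real^'n) set)"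
    using mem_box_cart(2)[of 0 0 "\<chi> i. 1 :: real^'n"] by auto
  then show ?thesis
    by (simp add: content_cbox_cart)
qed

theorem blichfeldt_Ints_vec:
  fixes S :: "(real^'n) set"
  assumes "bounded S" "S \<in> sets lebesgue"
  shows "\<exists>y. measure lebesgue S \<le> card {z. (\<forall>i. z $ i \<in> \<int>) \<and> y + z \<in> S}"
proof (rule ccontr)
  define count where "count y = card {z. (\<forall>i. z $ i \<in> \<int>) \<and> y + z \<in> S}" for y
  define c where "c = real_of_int (\<lceil>measure lebesgue S\<rceil> - 1)"
  \<comment> \<open>count is integer-valued, so it stays below measure S by a uniform margin\<close>
  assume "\<nexists>y. measure lebesgue S \<le> card {z. (\<forall>i. z $ i \<in> \<int>) \<and> y + z \<in> S}"
  then have "real (count y) < measure lebesgue S" for y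
    unfolding count_def by (meson not_le)
  then have "int (count y) < \<lceil>measure lebesgue S\<rceil>" for y
    by (simp add: less_ceiling_iff)
  then have count_le: "real (count y) \<le> c" for y
    unfolding c_def by (metis of_int_le_iff of_int_of_nat_eq zle_diff1_eq)
  define U :: "(real^'n) set" where "U = cbox 0 (\<chi> i. 1)"
  define Z where "Z = {z. (\<forall>i. z $ i \<in> \<int>) \<and> (\<exists>y\<in>U. y + z \<in> S)}"
  define A where "A z = {y\<in>U. y + z \<in> S}" for z
  have "finite Z"
    unfolding Z_def U_def using assms(1) by (intro finite_Ints_vec_translates_meeting) simp_all
  have A_lmeasurable: "A z \<in> lmeasurable" for z
    unfolding A_def U_def using assms(2) by (rule lmeasurable_cbox_slice)
  then have A_integrable: "indicat_real (A z) integrable_on UNIV" for z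
    by (simp add: integrable_on_indicator)
  have "measure lebesgue S \<le> (\<Sum>z\<in>Z. measure lebesgue (A z))"
    unfolding A_def U_def using assms(2) \<open>finite Z\<close>
    by (intro measure_le_sum_cube_slices) (auto simp: Z_def U_def)
  also have "\<dots> = integral UNIV (\<lambda>y. \<Sum>z\<in>Z. indicat_real (A z) y)"
    using A_integrable \<open>finite Z\<close> by (simp add: integral_sum lmeasure_integral_UNIV[OF A_lmeasurable])
  also have "\<dots> \<le> integral UNIV (\<lambda>y. c * indicat_real U y)"
  proof (rule integral_le)
    show "(\<lambda>y. \<Sum>z\<in>Z. indicat_real (A z) y) integrable_on UNIV"
      using A_integrable \<open>finite Z\<close> by (intro integrable_sum) auto
    show "(\<lambda>y. c * indicat_real U y) integrable_on UNIV"
      unfolding U_def by (intro integrable_on_mult_right) (simp add: integrable_on_indicator)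
    show "(\<Sum>z\<in>Z. indicat_real (A z) y) \<le> c * indicat_real U y" for y
      using sum_indicator_cube_slices[of U S y] \<open>finite Z\<close> count_le[of y]
      by (simp add: Z_def A_def count_def indicator_def)
  qed
  also have "\<dots> = c"
    by (simp add: U_def lmeasure_integral_UNIV[OF lmeasurable_cbox, symmetric] content_unit_cube_cart)
  finally show False
    using ceiling_correct[of "measure lebesgue S"] by (simp add: c_def)
qed

section \<open>Counting lattice points in boxes\<close>

lemma diff_mem_lattice_gen:
  assumes "a \<in> lattice_gen B" "b \<in> lattice_gen B"
  shows "a - b \<in> lattice_gen B"
proof -
  obtain y z where "a = B *v y" "b = B *v z" "\<forall>i. y $ i \<in> \<int>" "\<forall>i. z $ i \<in> \<int>"
    using assms by (auto simp: lattice_gen_def)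
  then show ?thesis
    unfolding lattice_gen_def by (auto simp: matrix_vector_mult_diff_distrib intro!: exI[of _ "y - z"])
qed

lemma infnorm_le_iff_cart:
  fixes x :: "real^'n"
  shows "infnorm x \<le> r \<longleftrightarrow> (\<forall>i. \<bar>x $ i\<bar> \<le> r)"
proof
  show "infnorm x \<le> r \<Longrightarrow> \<forall>i. \<bar>x $ i\<bar> \<le> r"
    using component_le_infnorm_cart order_trans by blast
  show "\<forall>i. \<bar>x $ i\<bar> \<le> r \<Longrightarrow> infnorm x \<le> r"
    unfolding infnorm_cart by (rule cSup_least) auto
qed

lemma infnorm_le_eq_cbox:
  "{x :: real^'n. infnorm x \<le> r} = cbox (- (\<chi> i. r)) (\<chi> i. r)"
  by (auto simp: infnorm_le_iff_cart mem_box_cart abs_le_iff) (meson minus_le_iff neg_le_iff_le)+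

lemma measure_infnorm_le:
  assumes "r \<ge> 0"
  shows "measure lebesgue {x :: real^'n. infnorm x \<le> r} = (2 * r) ^ CARD('n)"
proof -
  have "cbox (- (\<chi> i. r)) (\<chi> i. r :: real^'n) \<noteq> {}"
    using assms mem_box_cart(2)[of 0 "- (\<chi> i. r)" "\<chi> i. r :: real^'n"] by auto
  then show ?thesis
    unfolding infnorm_le_eq_cbox by (simp add: content_cbox_cart)
qed

lemma abs_inner_le_infnorm:
  fixes u m :: "real^'n"
  shows "\<bar>u \<bullet> m\<bar> \<le> CARD('n) * infnorm u * infnorm m"
proof -
  have "\<bar>u \<bullet> m\<bar> = \<bar>\<Sum>i\<in>UNIV. u $ i * m $ i\<bar>"
    by (simp add: inner_vec_def)
  also have "\<dots> \<le> (\<Sum>i\<in>UNIV. \<bar>u $ i * m $ i\<bar>)"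
    by (rule sum_abs)
  also have "\<dots> \<le> (\<Sum>i\<in>(UNIV :: 'n set). infnorm u * infnorm m)"
    by (intro sum_mono) (simp add: abs_mult mult_mono component_le_infnorm_cart infnorm_pos_le)
  finally show ?thesis
    by simp
qed

lemma finite_lattice_gen_infnorm_le:
  assumes "invertible B"
  shows "finite (lattice_gen B \<inter> {x. infnorm x \<le> t})"
proof -
  obtain B' where B': "B' ** B = mat 1"
    using assms invertible_def by blast
  define Z where "Z = {z \<in> (*v) B' ` {x. infnorm x \<le> t}. \<forall>i. z $ i \<in> \<int>}"
  have "finite Z"
    unfolding Z_def infnorm_le_eq_cbox
    by (intro finite_Ints_vec_bounded bounded_linear_image matrix_vector_mul_bounded_linear) simp
  moreover have "lattice_gen B \<inter> {x. infnorm x \<le> t} \<subseteq> (*v) B ` Z"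
  proof
    fix x assume "x \<in> lattice_gen B \<inter> {x. infnorm x \<le> t}"
    then obtain z where z: "x = B *v z" "\<forall>i. z $ i \<in> \<int>" "infnorm x \<le> t"
      by (auto simp: lattice_gen_def)
    then have "z = B' *v x"
      using B' by (simp add: matrix_vector_mul_assoc)
    then show "x \<in> (*v) B ` Z"
      using z by (auto simp: Z_def)
  qed
  ultimately show ?thesis
    by (meson finite_imageI finite_subset)
qed

definition lattice_count :: "real^'n^'n \<Rightarrow> real \<Rightarrow> nat" where
  "lattice_count B t = card (lattice_gen B \<inter> {x. infnorm x \<le> t})"

lemma card_le_lattice_count:
  assumes "invertible B"
    and Z: "\<And>z. z \<in> Z \<Longrightarrow> (\<forall>i. z $ i \<in> \<int>) \<and> infnorm (B *v (y + z)) \<le> t / 2"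
  shows "card Z \<le> lattice_count B t"
proof (cases "Z = {}")
  case False
  then obtain z0 where "z0 \<in> Z"
    by blast
  show ?thesis
    unfolding lattice_count_def
  proof (rule card_inj_on_le[of "\<lambda>z. B *v (z - z0)"])
    show "inj_on (\<lambda>z. B *v (z - z0)) Z"
      using inj_matrix_vector_mult[OF assms(1)] unfolding inj_on_def inj_def
      by (metis UNIV_I diff_add_cancel)
    show "(\<lambda>z. B *v (z - z0)) ` Z \<subseteq> lattice_gen B \<inter> {x. infnorm x \<le> t}"
    proof clarify
      fix z assume "z \<in> Z"
      have "B *v (z - z0) \<in> lattice_gen B"
        using Z[OF \<open>z \<in> Z\<close>] Z[OF \<open>z0 \<in> Z\<close>] unfolding lattice_gen_def
        by (auto intro!: exI[of _ "z - z0"])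
      moreover have "B *v (z - z0) = B *v (y + z) - B *v (y + z0)"
        by (simp add: matrix_vector_mult_diff_distrib[symmetric])
      then have "infnorm (B *v (z - z0)) \<le> infnorm (B *v (y + z)) + infnorm (B *v (y + z0))"
        by (metis diff_conv_add_uminus infnorm_neg infnorm_triangle)
      ultimately show "B *v (z - z0) \<in> lattice_gen B \<inter> {x. infnorm x \<le> t}"
        using Z[OF \<open>z \<in> Z\<close>] Z[OF \<open>z0 \<in> Z\<close>] by auto
    qed
  qed (rule finite_lattice_gen_infnorm_le[OF assms(1)])
qed simp

lemma lattice_count_ge:
  fixes B :: "real^'n^'n"
  assumes "invertible B" "t > 0"
  shows "t ^ CARD('n) / \<bar>det B\<bar> \<le> lattice_count B t"
proof -
  obtain B' where B': "B ** B' = mat 1" "B' ** B = mat 1"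
    using assms(1) invertible_def by blast
  define K where "K = {x :: real^'n. infnorm x \<le> t / 2}"
  define K' where "K' = (*v) B' ` K"
  have K: "bounded K" "K \<in> sets lebesgue"
    unfolding K_def infnorm_le_eq_cbox by simp_all
  have K': "bounded K'" "K' \<in> sets lebesgue"
    unfolding K'_def using measurable_matrix_image[OF K] fmeasurableD
    by (auto intro: bounded_linear_image[OF _ matrix_vector_mul_bounded_linear] K)
  have "(*v) B ` K' = K"
    unfolding K'_def image_image using B' by (simp add: matrix_vector_mul_assoc)
  moreover have "measure lebesgue K = t ^ CARD('n)"
    unfolding K_def using measure_infnorm_le[of "t / 2"] assms(2) by simp
  ultimately have "t ^ CARD('n) = \<bar>det B\<bar> * measure lebesgue K'"
    using measure_matrix_image[OF K', of B] by simp
  then have "t ^ CARD('n) / \<bar>det B\<bar> = measure lebesgue K'"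
    using assms(1) invertible_det_nz by force
  also obtain y where "\<dots> \<le> card {z. (\<forall>i. z $ i \<in> \<int>) \<and> y + z \<in> K'}"
    using blichfeldt_Ints_vec[OF K'] by blast
  also have "\<dots> \<le> lattice_count B t"
  proof (rule of_nat_mono, rule card_le_lattice_count[OF assms(1)])
    fix z assume "z \<in> {z. (\<forall>i. z $ i \<in> \<int>) \<and> y + z \<in> K'}"
    then show "(\<forall>i. z $ i \<in> \<int>) \<and> infnorm (B *v (y + z)) \<le> t / 2"
      using B' by (auto simp: K'_def K_def matrix_vector_mul_assoc)
  qed
  finally show ?thesis .
qed

lemma card_le_card_image_mult:
  assumes "finite A" "\<And>c. card {x\<in>A. f x = c} \<le> q"
  shows "card A \<le> card (f ` A) * q"
proof -
  have "card A = card (\<Union>c\<in>f ` A. {x\<in>A. f x = c})"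
    by (rule arg_cong[of _ _ card]) auto
  also have "\<dots> \<le> (\<Sum>c\<in>f ` A. card {x\<in>A. f x = c})"
    by (rule card_UN_le) (use assms(1) in simp)
  also have "\<dots> \<le> card (f ` A) * q"
    using sum_bounded_above[of "f ` A" "\<lambda>c. card {x\<in>A. f x = c}" q] assms(2) by simp
  finally show ?thesis .
qed

lemma card_lattice_cell_le:
  fixes B :: "real^'n^'n"
  assumes "invertible B" "s > 0" "P \<subseteq> lattice_gen B"
  shows "card {x\<in>P. (\<lambda>i. \<lfloor>x $ i / s\<rfloor>) = c} \<le> lattice_count B s"
proof (cases "{x\<in>P. (\<lambda>i. \<lfloor>x $ i / s\<rfloor>) = c} = {}")
  case False
  then obtain x0 where x0: "x0 \<in> P" "(\<lambda>i. \<lfloor>x0 $ i / s\<rfloor>) = c"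
    by blast
  show ?thesis
    unfolding lattice_count_def
  proof (rule card_inj_on_le[of "\<lambda>x. x - x0"])
    show "(\<lambda>x. x - x0) ` {x\<in>P. (\<lambda>i. \<lfloor>x $ i / s\<rfloor>) = c} \<subseteq> lattice_gen B \<inter> {x. infnorm x \<le> s}"
    proof clarify
      fix x assume x: "x \<in> P" "c = (\<lambda>i. \<lfloor>x $ i / s\<rfloor>)"
      have "\<bar>x $ i - x0 $ i\<bar> \<le> s" for i
      proof -
        have "\<lfloor>x $ i / s\<rfloor> = \<lfloor>x0 $ i / s\<rfloor>"
          using x(2) x0(2) by (simp add: fun_eq_iff)
        then have "\<bar>x $ i / s - x0 $ i / s\<bar> < 1"
          by linarith
        then show ?thesis
          using \<open>s > 0\<close> by (simp add: diff_divide_distrib[symmetric])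
      qed
      then show "x - x0 \<in> lattice_gen B \<inter> {x. infnorm x \<le> s}"
        using x(1) x0(1) assms(3) by (auto simp: infnorm_le_iff_cart intro: diff_mem_lattice_gen)
    qed
  qed (auto simp: inj_on_def finite_lattice_gen_infnorm_le[OF assms(1)])
next
  case True
  show ?thesis
    unfolding True by simp
qed

lemma lattice_count_le_9_pow:
  fixes B :: "real^'n^'n"
  assumes "invertible B" "t > 0"
  shows "lattice_count B t \<le> 9 ^ CARD('n) * lattice_count B (t / 4)"
proof -
  define s where "s = t / 4"
  define P where "P = lattice_gen B \<inter> {x. infnorm x \<le> t}"
  define cell where "cell x = (\<lambda>i. \<lfloor>x $ i / s\<rfloor>)" for x :: "real^'n"
  have "s > 0"
    using assms(2) by (simp add: s_def)
  have "cell x i \<in> {-4..4}" if "x \<in> P" for x i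
  proof -
    have "\<bar>x $ i\<bar> \<le> 4 * s"
      using that component_le_infnorm_cart[of x i] by (auto simp: P_def s_def)
    then have "-4 \<le> x $ i / s \<and> x $ i / s \<le> 4"
      using \<open>s > 0\<close> by (simp add: abs_le_iff field_simps)
    then show ?thesis
      unfolding cell_def by (simp add: le_floor_iff floor_le_iff)
  qed
  then have "cell ` P \<subseteq> UNIV \<rightarrow>\<^sub>E {-4..4}"
    by auto
  moreover have "finite (UNIV \<rightarrow>\<^sub>E {-4..4::int} :: ('n \<Rightarrow> int) set)"
    by (intro finite_PiE) auto
  ultimately have "card (cell ` P) \<le> card (UNIV \<rightarrow>\<^sub>E {-4..4::int} :: ('n \<Rightarrow> int) set)"
    by (rule card_mono[rotated])
  also have "\<dots> = 9 ^ CARD('n)"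
    by (simp add: card_PiE)
  finally have card_cells: "card (cell ` P) \<le> 9 ^ CARD('n)" .
  have "card P \<le> card (cell ` P) * lattice_count B s"
    using card_lattice_cell_le[OF assms(1) \<open>s > 0\<close>, of P] finite_lattice_gen_infnorm_le[OF assms(1)]
    by (intro card_le_card_image_mult) (simp_all add: P_def cell_def)
  also have "\<dots> \<le> 9 ^ CARD('n) * lattice_count B s"
    using card_cells by simp
  finally show ?thesis
    by (simp add: lattice_count_def P_def s_def)
qed

lemma inner_dual_lattice_gen_mem:
  fixes B :: "real^'n^'n" and s :: real
  assumes "u \<in> dual_lattice (lattice_gen B)" "infnorm u \<le> 1"
    and "m \<in> lattice_gen B" "infnorm m \<le> s"
  shows "u \<bullet> m \<in> of_int ` {-\<lfloor>CARD('n) * s\<rfloor>..\<lfloor>CARD('n) * s\<rfloor>}"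
proof -
  have "u \<bullet> m \<in> \<int>"
    using assms(1,3) by (simp add: dual_lattice_def)
  then obtain n where n: "u \<bullet> m = of_int n"
    by (rule Ints_cases)
  have "\<bar>u \<bullet> m\<bar> \<le> CARD('n) * infnorm u * infnorm m"
    by (rule abs_inner_le_infnorm)
  also have "\<dots> \<le> CARD('n) * 1 * s"
    using assms(2,4) by (intro mult_mono) (auto simp: infnorm_pos_le)
  finally have "\<bar>n\<bar> \<le> \<lfloor>CARD('n) * s\<rfloor>"
    unfolding le_floor_iff using n by simp
  then show ?thesis
    using n by (auto simp: abs_le_iff)
qed

lemma lattice_orthogonal_if_count_gt:
  fixes B :: "real^'n^'n" and u :: "real^'n" and t :: real
  assumes "t \<ge> 0"
    and many: "CARD('n) * t + 1 < lattice_count B (t / 2)"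
    and u: "u \<in> dual_lattice (lattice_gen B)" "infnorm u \<le> 1"
  shows "\<exists>m\<in>lattice_gen B \<inter> {x. infnorm x \<le> t}. m \<noteq> 0 \<and> u \<bullet> m = 0"
proof -
  define P where "P = lattice_gen B \<inter> {x. infnorm x \<le> t / 2}"
  define r where "r = \<lfloor>CARD('n) * (t / 2)\<rfloor>"
  have "(\<lambda>m. u \<bullet> m) ` P \<subseteq> of_int ` {-r..r}"
    unfolding P_def r_def by (blast intro: inner_dual_lattice_gen_mem[OF u])
  then have "card ((\<lambda>m. u \<bullet> m) ` P) \<le> card {-r..r}"
    by (meson card_image_le card_mono finite_atLeastAtMost_int finite_imageI order_trans)
  also have "real \<dots> \<le> CARD('n) * t + 1"
    using assms(1) unfolding r_def by simp linarith
  also have "\<dots> < card P"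
    using many by (simp add: P_def lattice_count_def)
  finally have "\<not> inj_on (\<lambda>m. u \<bullet> m) P"
    using card_image by fastforce
  then obtain m1 m2 where m: "m1 \<in> P" "m2 \<in> P" "m1 \<noteq> m2" "u \<bullet> m1 = u \<bullet> m2"
    unfolding inj_on_def by blast
  have "infnorm (m1 - m2) \<le> t"
    using infnorm_triangle[of m1 "- m2"] m(1,2) by (simp add: P_def infnorm_neg)
  moreover have "m1 - m2 \<in> lattice_gen B"
    using m(1,2) by (simp add: P_def diff_mem_lattice_gen)
  ultimately show ?thesis
    using m(3,4) by (intro bexI[of _ "m1 - m2"]) (simp_all add: inner_diff_right)
qed

lemma lattice_count_le_one_near_zero:
  fixes B :: "real^'n^'n"
  assumes "invertible B"
  obtains \<delta> where "\<delta> > 0" "\<And>s. s < \<delta> \<Longrightarrow> lattice_count B s \<le> 1"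
proof -
  define F where "F = lattice_gen B \<inter> {x. infnorm x \<le> 1} - {0}"
  define \<delta> where "\<delta> = Min (insert 1 (infnorm ` F))"
  have "finite F"
    using finite_lattice_gen_infnorm_le[OF assms] by (simp add: F_def)
  then have \<delta>: "\<delta> > 0" "\<delta> \<le> 1" "\<And>m. m \<in> F \<Longrightarrow> \<delta> \<le> infnorm m"
    by (auto simp: \<delta>_def F_def infnorm_pos_lt)
  have "lattice_count B s \<le> 1" if "s < \<delta>" for s
  proof -
    have "lattice_gen B \<inter> {x. infnorm x \<le> s} \<subseteq> {0}"
    proof
      fix m assume m: "m \<in> lattice_gen B \<inter> {x. infnorm x \<le> s}"
      show "m \<in> {0}"
      proof (rule ccontr)
        assume "m \<notin> {0}"
        then have "m \<in> F"
          using m \<open>s < \<delta>\<close> \<delta>(2) by (auto simp: F_def)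
        then have "\<delta> \<le> infnorm m"
          by (rule \<delta>(3))
        then show False
          using m \<open>s < \<delta>\<close> by simp
      qed
    qed
    then have "card (lattice_gen B \<inter> {x. infnorm x \<le> s}) \<le> card {0 :: real^'n}"
      by (rule card_mono[rotated]) simp
    then show ?thesis
      by (simp add: lattice_count_def)
  qed
  with \<delta>(1) show ?thesis
    by (rule that)
qed

section \<open>Construction of the set H\<close>

lemma linear_bound_lt_volume_bound:
  fixes K :: nat and D :: real
  assumes K: "K \<ge> 2" and D: "D > 0"
  defines "c \<equiv> 2 ^ K * (real K + 1) + 1"
  defines "T \<equiv> c * (1 + D powr (1 / (real K - 1)))"
  shows "real K * T + 1 < (T / 2) ^ K / D"
proof -
  define E where "E = D powr (1 / (real K - 1))"
  have "E > 0"
    using D by (simp add: E_def)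
  have "E ^ (K - 1) = D"
    using D K by (simp add: E_def powr_realpow[symmetric] powr_powr of_nat_diff)
  have "c \<ge> 1"
    by (simp add: c_def)
  have "T = c + c * E" "c * E \<ge> 0"
    using \<open>c \<ge> 1\<close> \<open>E > 0\<close> by (simp_all add: T_def E_def algebra_simps)
  then have "T \<ge> 1" "c * E \<le> T"
    using \<open>c \<ge> 1\<close> by linarith+
  have "c * D \<le> c ^ (K - 1) * D"
    using \<open>c \<ge> 1\<close> K D by (intro mult_right_mono) (auto intro: order_trans[OF _ power_increasing[of 1]])
  also have "\<dots> = (c * E) ^ (K - 1)"
    by (simp only: power_mult_distrib \<open>E ^ (K - 1) = D\<close>)
  also have "\<dots> \<le> T ^ (K - 1)"
    using \<open>c * E \<le> T\<close> \<open>E > 0\<close> \<open>c \<ge> 1\<close> by (intro power_mono) auto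
  finally have "c \<le> T ^ (K - 1) / D"
    using D by (simp add: field_simps)
  then have "T * c / 2 ^ K \<le> T * (T ^ (K - 1) / D) / 2 ^ K"
    using \<open>T \<ge> 1\<close> by (intro divide_right_mono mult_left_mono) auto
  also have "\<dots> = (T / 2) ^ K / D"
    using K by (simp add: power_divide power_eq_if[of T K])
  finally have "T * c / 2 ^ K \<le> (T / 2) ^ K / D" .
  moreover have "real K * T + 1 < T * c / 2 ^ K"
  proof -
    have "1 * (2::real) ^ K \<le> T * 2 ^ K"
      using \<open>T \<ge> 1\<close> by (intro mult_right_mono) auto
    then have "(2::real) ^ K < T + T * 2 ^ K"
      using \<open>T \<ge> 1\<close> by linarith
    then show ?thesis
      by (simp add: c_def field_simps)
  qed
  ultimately show ?thesis
    by linarith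
qed

lemma exists_critical_scale:
  fixes B :: "real^'n^'n" and T :: real
  assumes B: "invertible B" and "T > 0"
    and start: "CARD('n) * T + 1 < lattice_count B (T / 2)"
  obtains t :: real where "0 < t" "t \<le> T" "CARD('n) * t + 1 < lattice_count B (t / 2)"
    "lattice_count B (t / 4) \<le> CARD('n) * (t / 2) + 1"
proof -
  define k where "k = real CARD('n)"
  define Q where "Q j \<longleftrightarrow> k * (T / 2 ^ j) + 1 < lattice_count B (T / 2 ^ j / 2)" for j :: nat
  obtain \<delta> where "\<delta> > 0" and \<delta>: "\<And>s. s < \<delta> \<Longrightarrow> lattice_count B s \<le> 1"
    using lattice_count_le_one_near_zero[OF B] by blast
  obtain n :: nat where "(1 / 2) ^ n < 2 * \<delta> / T"
    using real_arch_pow_inv[of "2 * \<delta> / T" "1 / 2"] \<open>\<delta> > 0\<close> \<open>T > 0\<close> by auto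
  then have "T / 2 ^ n / 2 < \<delta>"
    using \<open>T > 0\<close> by (simp add: field_simps)
  then have "real (lattice_count B (T / 2 ^ n / 2)) \<le> 1"
    using \<delta> by simp
  moreover have "0 \<le> k * (T / 2 ^ n)"
    using \<open>T > 0\<close> by (simp add: k_def)
  ultimately have "\<not> Q n"
    unfolding Q_def by linarith
  moreover have "Q 0"
    using start by (simp add: Q_def k_def)
  ultimately obtain j where "Q j" "\<not> Q (Suc j)"
    using ex_least_nat_less[of "\<lambda>j. \<not> Q j" n] by auto
  define t where "t = T / 2 ^ j"
  have "T * 1 \<le> T * 2 ^ j"
    using \<open>T > 0\<close> by (intro mult_left_mono) simp_all
  then have t: "0 < t" "t \<le> T"
    using \<open>T > 0\<close> by (simp_all add: t_def divide_le_eq)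
  have many: "CARD('n) * t + 1 < lattice_count B (t / 2)"
    using \<open>Q j\<close> by (simp add: Q_def k_def t_def)
  have "T / 2 ^ Suc j = t / 2" "T / 2 ^ Suc j / 2 = t / 4"
    by (simp_all add: t_def)
  then have "\<not> k * (t / 2) + 1 < lattice_count B (t / 4)"
    using \<open>\<not> Q (Suc j)\<close> unfolding Q_def by metis
  then have few: "lattice_count B (t / 4) \<le> CARD('n) * (t / 2) + 1"
    by (simp add: k_def not_less)
  from t many few show ?thesis
    by (rule that)
qed

lemma exists_short_orthogonal_set:
  fixes B :: "real^'n^'n" and T :: real
  assumes B: "invertible B" and "T > 0"
    and start: "CARD('n) * T + 1 < lattice_count B (T / 2)"
  shows "\<exists>H. finite H \<and> H \<subseteq> lattice_gen B \<and> card H \<le> 9 ^ CARD('n) * (CARD('n) * T + 1)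
    \<and> (\<forall>m\<in>H. infnorm m \<le> T)
    \<and> (\<forall>u\<in>dual_lattice (lattice_gen B). infnorm u \<le> 1 \<longrightarrow> (\<exists>m\<in>H. m \<noteq> 0 \<and> u \<bullet> m = 0))"
proof -
  obtain t :: real where t: "0 < t" "t \<le> T" and many: "CARD('n) * t + 1 < lattice_count B (t / 2)"
    and few: "lattice_count B (t / 4) \<le> CARD('n) * (t / 2) + 1"
    by (rule exists_critical_scale[OF assms])
  define H where "H = lattice_gen B \<inter> {x. infnorm x \<le> t}"
  have "card H \<le> 9 ^ CARD('n) * lattice_count B (t / 4)"
    using lattice_count_le_9_pow[OF B \<open>0 < t\<close>] by (simp add: H_def lattice_count_def)
  then have "real (card H) \<le> real (9 ^ CARD('n) * lattice_count B (t / 4))"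
    by (rule of_nat_mono)
  also have "\<dots> \<le> 9 ^ CARD('n) * (CARD('n) * (t / 2) + 1)"
    using few by simp
  also have "\<dots> \<le> 9 ^ CARD('n) * (CARD('n) * T + 1)"
    using t by (intro mult_left_mono add_right_mono) simp_all
  finally have card_H: "card H \<le> 9 ^ CARD('n) * (CARD('n) * T + 1)" .
  have orthogonal: "\<exists>m\<in>H. m \<noteq> 0 \<and> u \<bullet> m = 0"
    if "u \<in> dual_lattice (lattice_gen B)" "infnorm u \<le> 1" for u
    using lattice_orthogonal_if_count_gt[OF _ many that] \<open>0 < t\<close> by (simp add: H_def)
  show ?thesis
  proof (intro exI[of _ H] conjI ballI impI)
    show "finite H"
      using finite_lattice_gen_infnorm_le[OF B] by (simp add: H_def)
    show "H \<subseteq> lattice_gen B"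
      by (simp add: H_def)
    show "infnorm m \<le> T" if "m \<in> H" for m
      using that \<open>t \<le> T\<close> by (simp add: H_def)
  qed (use card_H orthogonal in simp_all)
qed

lemma lattice_orthogonal_set_bound:
  fixes B :: "real^'n^'n" and k c E :: real
  assumes "CARD('n) \<ge> 2" and B: "invertible B"
  defines "k \<equiv> real CARD('n)"
  defines "c \<equiv> 2 ^ CARD('n) * (k + 1) + 1"
  defines "E \<equiv> \<bar>det B\<bar> powr (1 / (k - 1))"
  shows "\<exists>H. finite H \<and> H \<subseteq> lattice_gen B \<and> card H \<le> 9 ^ CARD('n) * (k * c + 1) * (1 + E)
    \<and> (\<forall>m\<in>H. infnorm m \<le> 9 ^ CARD('n) * (k * c + 1) * (1 + E))
    \<and> (\<forall>u\<in>dual_lattice (lattice_gen B). infnorm u \<le> 1 \<longrightarrow> (\<exists>m\<in>H. m \<noteq> 0 \<and> u \<bullet> m = 0))"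
proof -
  define T where "T = c * (1 + E)"
  have "c \<ge> 1" "k \<ge> 2" "E \<ge> 0"
    using assms(1) by (simp_all add: c_def k_def E_def)
  then have "T > 0"
    by (simp add: T_def add_pos_nonneg)
  have "k * T + 1 < (T / 2) ^ CARD('n) / \<bar>det B\<bar>"
    using linear_bound_lt_volume_bound[OF assms(1), of "\<bar>det B\<bar>"] B
    by (simp add: invertible_det_nz T_def E_def c_def k_def)
  also have "\<dots> \<le> lattice_count B (T / 2)"
    using lattice_count_ge[OF B] \<open>T > 0\<close> by simp
  finally obtain H where H: "finite H" "H \<subseteq> lattice_gen B" "card H \<le> 9 ^ CARD('n) * (k * T + 1)"
    "\<forall>m\<in>H. infnorm m \<le> T"
    "\<forall>u\<in>dual_lattice (lattice_gen B). infnorm u \<le> 1 \<longrightarrow> (\<exists>m\<in>H. m \<noteq> 0 \<and> u \<bullet> m = 0)"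
    using exists_short_orthogonal_set[OF B \<open>T > 0\<close>] by (auto simp: k_def)
  have "k * T + 1 \<le> (k * c + 1) * (1 + E)"
    using \<open>E \<ge> 0\<close> \<open>k \<ge> 2\<close> by (simp add: T_def algebra_simps)
  then have card_le: "9 ^ CARD('n) * (k * T + 1) \<le> 9 ^ CARD('n) * (k * c + 1) * (1 + E)"
    by simp
  have "1 * c \<le> k * c"
    using \<open>c \<ge> 1\<close> \<open>k \<ge> 2\<close> by (intro mult_right_mono) auto
  then have "c \<le> 1 * (k * c + 1)"
    by simp
  also have "\<dots> \<le> 9 ^ CARD('n) * (k * c + 1)"
    using \<open>c \<ge> 1\<close> \<open>k \<ge> 2\<close> by (intro mult_right_mono) auto
  finally have T_le: "T \<le> 9 ^ CARD('n) * (k * c + 1) * (1 + E)"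
    using \<open>E \<ge> 0\<close> by (simp add: T_def mult_right_mono)
  show ?thesis
  proof (intro exI[of _ H] conjI ballI impI)
    show "card H \<le> 9 ^ CARD('n) * (k * c + 1) * (1 + E)"
      using H(3) card_le by (rule order_trans)
    show "infnorm m \<le> 9 ^ CARD('n) * (k * c + 1) * (1 + E)" if "m \<in> H" for m
      using H(4) that T_le by (meson order_trans)
    show "\<exists>m\<in>H. m \<noteq> 0 \<and> u \<bullet> m = 0"
      if "u \<in> dual_lattice (lattice_gen B)" "infnorm u \<le> 1" for u
      using H(5) that by blast
  qed (fact H(1,2))+
qed

theorem lemma8:
  assumes "CARD('n) \<ge> 2"
  shows "\<exists>C>0. \<forall>B :: real^'n^'n. invertible B \<longrightarrow>
    (\<exists>H. finite H \<and> H \<subseteq> lattice_gen B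
      \<and> real (card H) \<le> C * (1 + \<bar>det B\<bar> powr (1 / (real CARD('n) - 1)))
      \<and> (\<forall>m\<in>H. infnorm m \<le> C * (1 + \<bar>det B\<bar> powr (1 / (real CARD('n) - 1))))
      \<and> (\<forall>u\<in>dual_lattice (lattice_gen B). infnorm u \<le> 1 \<longrightarrow>
            (\<exists>m\<in>H. m \<noteq> 0 \<and> u \<bullet> m = 0)))"
  by (intro exI[of _ "9 ^ CARD('n) * (real CARD('n) * (2 ^ CARD('n) * (real CARD('n) + 1) + 1) + 1)"]
        conjI allI impI lattice_orthogonal_set_bound[OF assms])
     (simp_all add: add_pos_nonneg)

end
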